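(* Let $n\geq 5$ be an odd integer and let $J_n$ be the flower snark. Then $\beta_\ell(J_n)=4n$ for every integer $\ell\geq 4$, and $\beta_\ell^s(J_n)=4n$ for every integer $\ell\geq 3$.
   Context: Flower snark $J_n$ ($n\geq 5$ odd): take $n$ disjoint stars $K_{1,3}$, the $i$th with vertices $T_i=\{a_i,b_i,c_i,d_i\}$, centre $b_i$ and leaves $a_i,c_i,d_i$; add the cycle $a_1a_2\cdots a_na_1$ and the cycle $c_1c_2\cdots c_nd_1d_2\cdots d_nc_1$. It has $4n$ vertices. $d$ is the shortest-path distance, $d(s,X)=\min_{x\in X}d(s,x)$ for nonempty $X$, $\mathcal{D}_S(X)=(d(s_1,X),\dots,d(s_k,X))$. $S$ is an $\{\ell\}$-resolving set if $\mathcal{D}_S(X)\neq\mathcal{D}_S(Y)$ for all distinct nonempty vertex sets $X,Y$ with $|X|,|Y|\leq\ell$; $S$ is an $\ell$-solid-resolving set if $\mathcal{D}_S(X)\neq\mathcal{D}_S(Y)$ for all distinct nonempty vertex sets $X,Y$ with $|X|\leq\ell$ ($Y$ arbitrary). $\beta_\ell$, $\beta_\ell^s$ denote the minimum sizes of such sets. *)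

theory Defs
  imports Main
begin

text \<open>Flower snark J_n. Vertices are pairs (t, i) with i < n (0-based index) and
 t = 0,1,2,3 standing for a_i, b_i, c_i, d_i respectively.\<close>

definition fs_vertices :: "nat \<Rightarrow> (nat \<times> nat) set" where
  "fs_vertices n = {0..<4} \<times> {0..<n}"

definition fs_edges0 :: "nat \<Rightarrow> ((nat \<times> nat) \<times> (nat \<times> nat)) set" where
  "fs_edges0 n =
     {((1,i),(0,i)) | i. i < n} \<union> {((1,i),(2,i)) | i. i < n} \<union> {((1,i),(3,i)) | i. i < n}
   \<union> {((0,i),(0,(i+1) mod n)) | i. i < n}
   \<union> {((2,i),(2,i+1)) | i. i + 1 < n} \<union> {((2,n-1),(3,0))}
   \<union> {((3,i),(3,i+1)) | i. i + 1 < n} \<union> {((3,n-1),(2,0))}"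

definition fs_adj :: "nat \<Rightarrow> ((nat \<times> nat) \<times> (nat \<times> nat)) set" where
  "fs_adj n = fs_edges0 n \<union> (fs_edges0 n)\<inverse>"

definition fs_dist :: "nat \<Rightarrow> nat \<times> nat \<Rightarrow> nat \<times> nat \<Rightarrow> nat" where
  "fs_dist n u v = (LEAST k. (u, v) \<in> fs_adj n ^^ k)"

definition fs_setdist :: "nat \<Rightarrow> nat \<times> nat \<Rightarrow> (nat \<times> nat) set \<Rightarrow> nat" where
  "fs_setdist n s X = Min ((\<lambda>x. fs_dist n s x) ` X)"

definition same_rep :: "nat \<Rightarrow> (nat \<times> nat) set \<Rightarrow> (nat \<times> nat) set \<Rightarrow> (nat \<times> nat) set \<Rightarrow> bool" where
  "same_rep n S X Y = (\<forall>s\<in>S. fs_setdist n s X = fs_setdist n s Y)"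

definition l_resolving :: "nat \<Rightarrow> nat \<Rightarrow> (nat \<times> nat) set \<Rightarrow> bool" where
  "l_resolving n l S = (S \<subseteq> fs_vertices n \<and>
     (\<forall>X Y. X \<subseteq> fs_vertices n \<and> Y \<subseteq> fs_vertices n \<and> X \<noteq> {} \<and> Y \<noteq> {}
        \<and> card X \<le> l \<and> card Y \<le> l \<and> X \<noteq> Y \<longrightarrow> \<not> same_rep n S X Y))"

definition l_solid_resolving :: "nat \<Rightarrow> nat \<Rightarrow> (nat \<times> nat) set \<Rightarrow> bool" where
  "l_solid_resolving n l S = (S \<subseteq> fs_vertices n \<and>
     (\<forall>X Y. X \<subseteq> fs_vertices n \<and> Y \<subseteq> fs_vertices n \<and> X \<noteq> {} \<and> Y \<noteq> {}
        \<and> card X \<le> l \<and> X \<noteq> Y \<longrightarrow> \<not> same_rep n S X Y))"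

definition beta_l :: "nat \<Rightarrow> nat \<Rightarrow> nat" where
  "beta_l n l = (LEAST k. \<exists>S. l_resolving n l S \<and> card S = k)"

definition beta_s :: "nat \<Rightarrow> nat \<Rightarrow> nat" where
  "beta_s n l = (LEAST k. \<exists>S. l_solid_resolving n l S \<and> card S = k)"

end

theory Submission
  imports Defs
begin

(* Every vertex v of J_n has at most three neighbours, and a shortest path from any other
   vertex s to v enters v through one of them, so d(s, N(v)) = d(s, N[v]). Hence a set S
   that misses v cannot tell the open neighbourhood N(v) (at most 3 vertices) from the
   closed one N[v] (at most 4 vertices): an {l}-resolving set with l >= 4 or an
   l-solid-resolving set with l >= 3 must contain every vertex. Conversely the whole vertex
   set resolves all nonempty sets, since d(x, X) = 0 exactly when x is in X. *)

lemma Suc_mod_neq_self: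
  assumes "2 \<le> n"
  shows "Suc i mod n \<noteq> i"
proof (cases "Suc i < n")
  case False
  then consider "Suc i = n" | "n \<le> i" by linarith
  then show ?thesis
  proof cases
    case 2
    have "Suc i mod n < n" using assms by simp
    with 2 show ?thesis by linarith
  qed (use assms in auto)
qed simp

lemma pred_mod_Suc_mod:
  assumes "j < n"
  shows "(Suc j mod n + n - 1) mod n = j"
proof (cases "Suc j < n")
  case False
  with assms have "Suc j = n" by simp
  then show ?thesis by auto
qed (use assms in simp)

lemma finite_fs_vertices: "finite (fs_vertices n)"
  by (simp add: fs_vertices_def)

lemma card_fs_vertices: "card (fs_vertices n) = 4 * n"
  by (simp add: fs_vertices_def)

lemma fs_adj_sym: "(u, v) \<in> fs_adj n \<longleftrightarrow> (v, u) \<in> fs_adj n"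
  by (auto simp: fs_adj_def)

lemma fs_adj_subset_vertices:
  assumes "n > 0"
  shows "fs_adj n \<subseteq> fs_vertices n \<times> fs_vertices n"
  using assms by (auto simp: fs_adj_def fs_edges0_def fs_vertices_def)

lemma fs_adj_irrefl:
  assumes "2 \<le> n"
  shows "(v, v) \<notin> fs_adj n"
  using assms Suc_mod_neq_self[OF assms] by (auto simp: fs_adj_def fs_edges0_def)

lemma fs_adj_spoke:
  assumes "i < n" "t < 4" "t \<noteq> 1"
  shows "((t, i), (1, i)) \<in> fs_adj n"
proof -
  from assms(2,3) consider "t = 0" | "t = 2" | "t = 3" by linarith
  then show ?thesis by cases (use assms(1) in \<open>simp_all add: fs_adj_def fs_edges0_def\<close>)
qed

definition fs_nbhd :: "nat \<Rightarrow> nat \<times> nat \<Rightarrow> (nat \<times> nat) set" where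
  "fs_nbhd n v = fs_adj n `` {v}"

lemma fs_nbhd_a:
  assumes "i < n"
  shows "fs_nbhd n (0, i) \<subseteq> {(1, i), (0, (i + 1) mod n), (0, (i + n - 1) mod n)}"
  using assms pred_mod_Suc_mod by (auto simp: fs_nbhd_def fs_adj_def fs_edges0_def)

lemma fs_nbhd_b: "fs_nbhd n (1, i) \<subseteq> {(0, i), (2, i), (3, i)}"
  by (auto simp: fs_nbhd_def fs_adj_def fs_edges0_def)

lemma fs_nbhd_c:
  "fs_nbhd n (2, i) \<subseteq> {(1, i), if i + 1 < n then (2, i + 1) else (3, 0),
                           if i = 0 then (3, n - 1) else (2, i - 1)}"
  by (auto simp: fs_nbhd_def fs_adj_def fs_edges0_def)

lemma fs_nbhd_d:
  "fs_nbhd n (3, i) \<subseteq> {(1, i), if i + 1 < n then (3, i + 1) else (2, 0),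
                           if i = 0 then (2, n - 1) else (3, i - 1)}"
  by (auto simp: fs_nbhd_def fs_adj_def fs_edges0_def)

lemma fs_nbhd_subset_vertices:
  assumes "v \<in> fs_vertices n"
  shows "fs_nbhd n v \<subseteq> fs_vertices n"
proof -
  have "n > 0" using assms by (auto simp: fs_vertices_def)
  then show ?thesis using fs_adj_subset_vertices by (auto simp: fs_nbhd_def)
qed

lemma fs_nbhd_nonempty:
  assumes "v \<in> fs_vertices n"
  shows "fs_nbhd n v \<noteq> {}"
proof -
  obtain t i where v: "v = (t, i)" "i < n" using assms by (auto simp: fs_vertices_def)
  have "(if t = 1 then (0, i) else (1, i)) \<in> fs_nbhd n v"
    using assms v fs_adj_spoke[of i n 0] fs_adj_spoke[of i n t]
    by (auto simp: fs_nbhd_def fs_adj_sym fs_vertices_def)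
  then show ?thesis by blast
qed

lemma card_fs_nbhd_le:
  assumes "v \<in> fs_vertices n"
  shows "card (fs_nbhd n v) \<le> 3"
proof -
  have card_le_3: "card A \<le> 3" if "A \<subseteq> {a, b, c}" for A and a b c :: "nat \<times> nat"
    using card_mono[OF _ that] card_length[of "[a, b, c]"] by simp
  obtain t i where v: "v = (t, i)" "t < 4" "i < n" using assms by (auto simp: fs_vertices_def)
  then consider "t = 0" | "t = 1" | "t = 2" | "t = 3" by linarith
  then show ?thesis
    by cases (use v fs_nbhd_a fs_nbhd_b fs_nbhd_c fs_nbhd_d card_le_3 in metis)+
qed

lemma fs_outer_reaches_origin:
  assumes "i < n"
  shows "((0, i), (0, 0)) \<in> (fs_adj n)\<^sup>*"
  using assms
proof (induction i)
  case (Suc i)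
  then have "((0, Suc i), (0, i)) \<in> fs_adj n"
    by (auto simp: fs_adj_def fs_edges0_def)
  with Suc show ?case by (meson Suc_lessD converse_rtrancl_into_rtrancl)
qed simp

lemma fs_reaches_origin:
  assumes "v \<in> fs_vertices n"
  shows "(v, (0, 0)) \<in> (fs_adj n)\<^sup>*"
proof -
  obtain t i where v: "v = (t, i)" "t < 4" "i < n" using assms by (auto simp: fs_vertices_def)
  have "((1, i), (0, i)) \<in> fs_adj n" using fs_adj_spoke[of i n 0] v(3) fs_adj_sym by simp
  then have hub: "((1, i), (0, 0)) \<in> (fs_adj n)\<^sup>*"
    using fs_outer_reaches_origin[OF v(3)] by (rule converse_rtrancl_into_rtrancl)
  show ?thesis
  proof (cases "t = 1")
    case False
    with v fs_adj_spoke[OF v(3,2) False] have "(v, (1, i)) \<in> fs_adj n" by simp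
    with hub show ?thesis by (meson converse_rtrancl_into_rtrancl)
  qed (use v hub in simp)
qed

lemma fs_connected:
  assumes "u \<in> fs_vertices n" "v \<in> fs_vertices n"
  shows "(u, v) \<in> (fs_adj n)\<^sup>*"
proof -
  have "sym ((fs_adj n)\<^sup>*)"
    by (rule sym_rtrancl) (auto simp: sym_def fs_adj_def)
  then have "((0, 0), v) \<in> (fs_adj n)\<^sup>*"
    using fs_reaches_origin[OF assms(2)] by (auto dest: symD)
  with fs_reaches_origin[OF assms(1)] show ?thesis by (rule rtrancl_trans)
qed

lemma fs_dist_le: "(u, v) \<in> fs_adj n ^^ k \<Longrightarrow> fs_dist n u v \<le> k"
  unfolding fs_dist_def by (rule Least_le)

lemma fs_dist_path:
  assumes "u \<in> fs_vertices n" "v \<in> fs_vertices n"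
  shows "(u, v) \<in> fs_adj n ^^ fs_dist n u v"
proof -
  obtain k where "(u, v) \<in> fs_adj n ^^ k"
    using rtrancl_imp_relpow[OF fs_connected[OF assms]] ..
  then show ?thesis unfolding fs_dist_def by (rule LeastI)
qed

lemma fs_dist_eq_0_iff:
  assumes "u \<in> fs_vertices n" "v \<in> fs_vertices n"
  shows "fs_dist n u v = 0 \<longleftrightarrow> u = v"
proof
  show "u = v" if "fs_dist n u v = 0" using fs_dist_path[OF assms] that by simp
  show "fs_dist n u v = 0" if "u = v" using fs_dist_le[of u v 0 n] that by simp
qed

lemma fs_dist_closer_nbr:
  assumes "s \<in> fs_vertices n" "v \<in> fs_vertices n" "s \<noteq> v"
  obtains w where "w \<in> fs_nbhd n v" "fs_dist n s w < fs_dist n s v"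
proof -
  obtain m where m: "fs_dist n s v = Suc m"
    using fs_dist_eq_0_iff[OF assms(1,2)] assms(3) not0_implies_Suc by blast
  then obtain w where w: "(s, w) \<in> fs_adj n ^^ m" "(w, v) \<in> fs_adj n"
    using fs_dist_path[OF assms(1,2)] by auto
  show thesis
  proof
    show "w \<in> fs_nbhd n v" using w(2) by (simp add: fs_nbhd_def fs_adj_sym)
    show "fs_dist n s w < fs_dist n s v" using fs_dist_le[OF w(1)] m by simp
  qed
qed

lemma fs_setdist_eq_0_iff:
  assumes "X \<subseteq> fs_vertices n" "X \<noteq> {}" "x \<in> fs_vertices n"
  shows "fs_setdist n x X = 0 \<longleftrightarrow> x \<in> X"
proof -
  have "finite X" using assms(1) finite_fs_vertices by (rule finite_subset)
  then have "fs_setdist n x X = 0 \<longleftrightarrow> (\<exists>y\<in>X. fs_dist n x y = 0)"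
    using assms(2) by (auto simp: fs_setdist_def Min_eq_iff)
  also have "\<dots> \<longleftrightarrow> x \<in> X"
    using assms(1,3) fs_dist_eq_0_iff by blast
  finally show ?thesis .
qed

lemma same_rep_vertices_imp_eq:
  assumes "X \<subseteq> fs_vertices n" "Y \<subseteq> fs_vertices n" "X \<noteq> {}" "Y \<noteq> {}"
    and "same_rep n (fs_vertices n) X Y"
  shows "X = Y"
proof -
  have "x \<in> X \<longleftrightarrow> x \<in> Y" if "x \<in> fs_vertices n" for x
    using that assms(5) fs_setdist_eq_0_iff[OF assms(1,3) that] fs_setdist_eq_0_iff[OF assms(2,4) that]
    by (simp add: same_rep_def)
  with assms(1,2) show ?thesis by blast
qed

lemma fs_setdist_insert_nbhd:
  assumes "s \<in> fs_vertices n" "v \<in> fs_vertices n" "s \<noteq> v"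
  shows "fs_setdist n s (insert v (fs_nbhd n v)) = fs_setdist n s (fs_nbhd n v)"
proof -
  obtain w where w: "w \<in> fs_nbhd n v" "fs_dist n s w < fs_dist n s v"
    using fs_dist_closer_nbr[OF assms] .
  have "finite (fs_nbhd n v)"
    using fs_nbhd_subset_vertices[OF assms(2)] finite_fs_vertices by (rule finite_subset)
  with w have "fs_setdist n s (fs_nbhd n v) \<le> fs_dist n s v"
    unfolding fs_setdist_def by (meson Min_le finite_imageI image_eqI less_imp_le order_trans)
  moreover have "fs_dist n s ` fs_nbhd n v \<noteq> {}" using w(1) by blast
  ultimately show ?thesis
    using \<open>finite (fs_nbhd n v)\<close> by (simp add: fs_setdist_def Min_insert min_absorb2)
qed

lemma same_rep_nbhd_closed_nbhd:
  assumes "v \<in> fs_vertices n" "S \<subseteq> fs_vertices n - {v}"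
  shows "same_rep n S (fs_nbhd n v) (insert v (fs_nbhd n v))"
  unfolding same_rep_def
proof
  fix s assume "s \<in> S"
  with assms(2) have "s \<in> fs_vertices n" "s \<noteq> v" by auto
  then show "fs_setdist n s (fs_nbhd n v) = fs_setdist n s (insert v (fs_nbhd n v))"
    using fs_setdist_insert_nbhd[OF _ assms(1)] by simp
qed

lemma fs_vertices_l_resolving: "l_resolving n l (fs_vertices n)"
  unfolding l_resolving_def using same_rep_vertices_imp_eq by blast

lemma fs_vertices_l_solid_resolving: "l_solid_resolving n l (fs_vertices n)"
  unfolding l_solid_resolving_def using same_rep_vertices_imp_eq by blast

lemma resolving_eq_vertices:
  assumes "2 \<le> n" "S \<subseteq> fs_vertices n"
    and resolves: "\<And>X Y. X \<subseteq> fs_vertices n \<Longrightarrow> Y \<subseteq> fs_vertices n \<Longrightarrow> X \<noteq> {} \<Longrightarrow> Y \<noteq> {} \<Longrightarrow>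
      card X \<le> 3 \<Longrightarrow> card Y \<le> 4 \<Longrightarrow> X \<noteq> Y \<Longrightarrow> \<not> same_rep n S X Y"
  shows "S = fs_vertices n"
proof (rule ccontr)
  assume "S \<noteq> fs_vertices n"
  with assms(2) obtain v where v: "v \<in> fs_vertices n" "S \<subseteq> fs_vertices n - {v}" by blast
  let ?N = "fs_nbhd n v"
  have "v \<notin> ?N" using fs_adj_irrefl[OF assms(1)] by (simp add: fs_nbhd_def)
  moreover have "finite ?N"
    using fs_nbhd_subset_vertices[OF v(1)] finite_fs_vertices by (rule finite_subset)
  ultimately have "card (insert v ?N) \<le> 4" using card_fs_nbhd_le[OF v(1)] by simp
  with \<open>v \<notin> ?N\<close> show False
    using resolves[of ?N "insert v ?N"] same_rep_nbhd_closed_nbhd[OF v]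
      fs_nbhd_subset_vertices[OF v(1)] fs_nbhd_nonempty[OF v(1)] card_fs_nbhd_le[OF v(1)] v(1)
    by blast
qed

lemma l_resolving_iff:
  assumes "2 \<le> n" "4 \<le> l"
  shows "l_resolving n l S \<longleftrightarrow> S = fs_vertices n"
proof
  assume res: "l_resolving n l S"
  show "S = fs_vertices n"
  proof (rule resolving_eq_vertices[OF assms(1)])
    show "S \<subseteq> fs_vertices n" using res by (simp add: l_resolving_def)
    fix X Y :: "(nat \<times> nat) set"
    assume XY: "X \<subseteq> fs_vertices n" "Y \<subseteq> fs_vertices n" "X \<noteq> {}" "Y \<noteq> {}"
      "card X \<le> 3" "card Y \<le> 4" "X \<noteq> Y"
    then have "card X \<le> l" "card Y \<le> l" using assms(2) by linarith+
    with XY res show "\<not> same_rep n S X Y" unfolding l_resolving_def by blast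
  qed
qed (simp add: fs_vertices_l_resolving)

lemma l_solid_resolving_iff:
  assumes "2 \<le> n" "3 \<le> l"
  shows "l_solid_resolving n l S \<longleftrightarrow> S = fs_vertices n"
proof
  assume res: "l_solid_resolving n l S"
  show "S = fs_vertices n"
  proof (rule resolving_eq_vertices[OF assms(1)])
    show "S \<subseteq> fs_vertices n" using res by (simp add: l_solid_resolving_def)
    fix X Y :: "(nat \<times> nat) set"
    assume XY: "X \<subseteq> fs_vertices n" "Y \<subseteq> fs_vertices n" "X \<noteq> {}" "Y \<noteq> {}"
      "card X \<le> 3" "card Y \<le> 4" "X \<noteq> Y"
    then have "card X \<le> l" using assms(2) by linarith
    with XY res show "\<not> same_rep n S X Y" unfolding l_solid_resolving_def by blast
  qed
qed (simp add: fs_vertices_l_solid_resolving)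

theorem mainTheorem14:
  fixes n :: nat
  assumes "n \<ge> 5" and "odd n"
  shows "(\<forall>l::nat. l \<ge> 4 \<longrightarrow> beta_l n l = 4 * n)
       \<and> (\<forall>l::nat. l \<ge> 3 \<longrightarrow> beta_s n l = 4 * n)"
proof -
  have "2 \<le> n" using assms(1) by simp
  moreover have "(LEAST k. 4 * n = k) = 4 * n" by (rule Least_equality) simp_all
  ultimately show ?thesis
    by (simp add: beta_l_def beta_s_def l_resolving_iff l_solid_resolving_iff card_fs_vertices)
qed

end
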